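(* Let $\mathcal{M}=\langle W,V\rangle$ be a model, $X\subseteq W$ an information state, and $q,p_1,\dots,p_n$ propositional variables. Then $q$ depends on $p_1,\dots,p_n$ in $X$ if and only if, for any $w\in W$, $$\mathcal{M},w,X\vDash \Big(\bigwedge_{1\leq i\leq n}(\Box p_i\vee\Box\neg p_i)\Big)\Rightarrow(\Box q\vee\Box\neg q)$$ according to the Kolodny–MacFarlane semantics.
   Context: Formulas are built by $\varphi::= p\mid \neg\varphi\mid (\varphi\wedge\varphi)\mid \Box\varphi \mid (\varphi\Rightarrow\varphi)$, with $\vee$ defined as usual. A model is $\mathcal{M}=\langle W,V\rangle$ with $W$ nonempty and $V$ assigning each propositional variable a subset of $W$. The Kolodny–MacFarlane semantics evaluates at $\mathcal{M},w,X$ with $w\in W$, $X\subseteq W$: $\mathcal{M},w,X\vDash p$ iff $w\in V(p)$; $\neg,\wedge$ Boolean; $\mathcal{M},w,X\vDash\Box\varphi$ iff $\mathcal{M},v,X\vDash\varphi$ for all $v\in X$; $\mathcal{M},w,X\vDash\varphi\Rightarrow\psi$ iff $\mathcal{M},w,X'\vDash\Box\psi$ for every $X'$ such that (i) $X'\subseteq X$, (ii) $X'\subseteq\llbracket\varphi\rrbracket^{\mathcal{M},X'}$, and (iii) there is no $X''$ satisfying (i) and (ii) with $X'\subsetneq X''$; here $\llbracket\varphi\rrbracket^{\mathcal{M},Y}=\{v\in Y\mid\mathcal{M},v,Y\vDash\varphi\}$. In an information state $X$, $q$ depends on $p_1,\dots,p_n$ iff any two worlds in $X$ that agree on the truth values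 of $p_1,\dots,p_n$ also agree on the truth value of $q$. *)

theory Defs
  imports Main
begin

datatype 'a fm =
    Var 'a
  | Neg "'a fm"
  | And "'a fm" "'a fm"
  | Box "'a fm"
  | Cond "'a fm" "'a fm"

definition Or :: "'a fm \<Rightarrow> 'a fm \<Rightarrow> 'a fm" where
  "Or \<phi> \<psi> = Neg (And (Neg \<phi>) (Neg \<psi>))"

(* Kolodny--MacFarlane semantics; a model is <W, V>, only V matters for evaluation.
   sat V w X \<phi>  means  M, w, X |= \<phi>. *)
primrec sat :: "('a \<Rightarrow> 'w set) \<Rightarrow> 'w \<Rightarrow> 'w set \<Rightarrow> 'a fm \<Rightarrow> bool" where
  "sat V w X (Var p) = (w \<in> V p)"
| "sat V w X (Neg \<phi>) = (\<not> sat V w X \<phi>)"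
| "sat V w X (And \<phi> \<psi>) = (sat V w X \<phi> \<and> sat V w X \<psi>)"
| "sat V w X (Box \<phi>) = (\<forall>v\<in>X. sat V v X \<phi>)"
| "sat V w X (Cond \<phi> \<psi>) =
     (\<forall>X'. (X' \<subseteq> X \<and> X' \<subseteq> {v \<in> X'. sat V v X' \<phi>}
            \<and> \<not> (\<exists>X''. X'' \<subseteq> X \<and> X'' \<subseteq> {v \<in> X''. sat V v X'' \<phi>} \<and> X' \<subset> X''))
          \<longrightarrow> (\<forall>v\<in>X'. sat V v X' \<psi>))"

definition Top :: "'a fm" where
  "Top = Neg (And (Var undefined) (Neg (Var undefined)))"

fun BigAnd :: "'a fm list \<Rightarrow> 'a fm" where
  "BigAnd [] = Top"
| "BigAnd [\<phi>] = \<phi>"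
| "BigAnd (\<phi> # \<psi> # \<chi>s) = And \<phi> (BigAnd (\<psi> # \<chi>s))"

definition depends :: "('a \<Rightarrow> 'w set) \<Rightarrow> 'w set \<Rightarrow> 'a \<Rightarrow> 'a list \<Rightarrow> bool" where
  "depends V X q ps =
     (\<forall>w\<in>X. \<forall>v\<in>X. (\<forall>p\<in>set ps. (w \<in> V p \<longleftrightarrow> v \<in> V p)) \<longrightarrow> (w \<in> V q \<longleftrightarrow> v \<in> V q))"

definition decided :: "'a \<Rightarrow> 'a fm" where
  "decided p = Or (Box (Var p)) (Box (Neg (Var p)))"

end

theory Submission
  imports Defs
begin

text \<open>The antecedent holds throughout a substate exactly when all of its worlds agree on
  \<open>p\<^sub>1, \<dots>, p\<^sub>n\<close>. Hence the maximal substates of \<open>X\<close> supporting it are the classes of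
  worlds of \<open>X\<close> agreeing on \<open>p\<^sub>1, \<dots>, p\<^sub>n\<close>, and the conditional says that each such class
  settles \<open>q\<close>, which is dependence.\<close>

definition supports :: "('a \<Rightarrow> 'w set) \<Rightarrow> 'w set \<Rightarrow> 'a fm \<Rightarrow> bool" where
  "supports V Y \<phi> \<longleftrightarrow> (\<forall>v\<in>Y. sat V v Y \<phi>)"

definition max_supporting :: "('a \<Rightarrow> 'w set) \<Rightarrow> 'w set \<Rightarrow> 'a fm \<Rightarrow> 'w set \<Rightarrow> bool" where
  "max_supporting V X \<phi> Y \<longleftrightarrow>
     Y \<subseteq> X \<and> supports V Y \<phi> \<and> \<not> (\<exists>Z. Z \<subseteq> X \<and> supports V Z \<phi> \<and> Y \<subset> Z)"

lemma supports_iff_subset: "supports V Y \<phi> \<longleftrightarrow> Y \<subseteq> {v \<in> Y. sat V v Y \<phi>}"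
  by (auto simp: supports_def)

lemma sat_Cond:
  "sat V w X (Cond \<phi> \<psi>) \<longleftrightarrow> (\<forall>Y. max_supporting V X \<phi> Y \<longrightarrow> supports V Y \<psi>)"
  unfolding sat.simps supports_iff_subset[symmetric] max_supporting_def supports_def[of V _ \<psi>] ..

lemma sat_BigAnd: "sat V w Y (BigAnd \<phi>s) \<longleftrightarrow> (\<forall>\<phi>\<in>set \<phi>s. sat V w Y \<phi>)"
  by (induction \<phi>s rule: BigAnd.induct) (auto simp: Top_def)

lemma sat_decided: "sat V w Y (decided p) \<longleftrightarrow> (\<forall>u\<in>Y. \<forall>v\<in>Y. u \<in> V p \<longleftrightarrow> v \<in> V p)"
  by (auto simp: decided_def Or_def)

lemma supports_decided: "supports V Y (decided p) \<longleftrightarrow> (\<forall>u\<in>Y. \<forall>v\<in>Y. u \<in> V p \<longleftrightarrow> v \<in> V p)"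
  by (auto simp: supports_def sat_decided)

lemma supports_BigAnd_decided:
  "supports V Y (BigAnd (map decided ps)) \<longleftrightarrow>
     (\<forall>u\<in>Y. \<forall>v\<in>Y. \<forall>p\<in>set ps. u \<in> V p \<longleftrightarrow> v \<in> V p)"
  by (auto simp: supports_def sat_BigAnd sat_decided)

lemma max_supporting_agreement_class:
  assumes "w \<in> X"
  shows "max_supporting V X (BigAnd (map decided ps)) {u\<in>X. \<forall>p\<in>set ps. u \<in> V p \<longleftrightarrow> w \<in> V p}"
    (is "max_supporting V X ?\<phi> ?C")
proof -
  have "supports V ?C ?\<phi>"
    unfolding supports_BigAnd_decided by simp
  moreover have "\<not> ?C \<subset> Z" if "supports V Z ?\<phi>" "Z \<subseteq> X" for Z
  proof
    assume "?C \<subset> Z"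
    with \<open>w \<in> X\<close> have "w \<in> Z" by blast
    with that have "Z \<subseteq> ?C"
      unfolding supports_BigAnd_decided by blast
    with \<open>?C \<subset> Z\<close> show False by blast
  qed
  ultimately show ?thesis
    unfolding max_supporting_def by blast
qed

theorem proposition11:
  fixes W :: "'w set" and V :: "'a \<Rightarrow> 'w set" and X :: "'w set"
    and q :: 'a and ps :: "'a list"
  assumes "W \<noteq> {}" and "\<forall>p. V p \<subseteq> W" and "X \<subseteq> W"
  shows "depends V X q ps \<longleftrightarrow>
         (\<forall>w\<in>W. sat V w X (Cond (BigAnd (map decided ps)) (decided q)))"
proof
  assume dep: "depends V X q ps"
  have "supports V Y (decided q)"
    if "max_supporting V X (BigAnd (map decided ps)) Y" for Y
    unfolding supports_decided
  proof (intro ballI)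
    fix u v assume "u \<in> Y" "v \<in> Y"
    moreover have "Y \<subseteq> X" "supports V Y (BigAnd (map decided ps))"
      using that by (simp_all add: max_supporting_def)
    ultimately show "u \<in> V q \<longleftrightarrow> v \<in> V q"
      using dep unfolding depends_def supports_BigAnd_decided by (meson subsetD)
  qed
  then show "\<forall>w\<in>W. sat V w X (Cond (BigAnd (map decided ps)) (decided q))"
    unfolding sat_Cond by blast
next
  assume "\<forall>w\<in>W. sat V w X (Cond (BigAnd (map decided ps)) (decided q))"
  with \<open>W \<noteq> {}\<close> obtain w where "sat V w X (Cond (BigAnd (map decided ps)) (decided q))"
    by blast
  then have cond: "supports V Y (decided q)"
    if "max_supporting V X (BigAnd (map decided ps)) Y" for Y
    using that unfolding sat_Cond by blast
  show "depends V X q ps"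
    unfolding depends_def
  proof (intro ballI impI)
    fix w v assume "w \<in> X" "v \<in> X" "\<forall>p\<in>set ps. w \<in> V p \<longleftrightarrow> v \<in> V p"
    then have "v \<in> {u\<in>X. \<forall>p\<in>set ps. u \<in> V p \<longleftrightarrow> w \<in> V p}"
      by simp
    moreover have "w \<in> {u\<in>X. \<forall>p\<in>set ps. u \<in> V p \<longleftrightarrow> w \<in> V p}"
      using \<open>w \<in> X\<close> by simp
    ultimately show "w \<in> V q \<longleftrightarrow> v \<in> V q"
      using cond[OF max_supporting_agreement_class[OF \<open>w \<in> X\<close>]]
      unfolding supports_decided by blast
  qed
qed

end
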